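(* Let $U\in\mathbb{R}^{d\times n}$ be a frame with $n\ge2$, $z\in\mathbb{R}^n_{++}$, and $c\in\mathbb{R}^n_+$ with $\langle c,1_n\rangle=d$. Order the indices so that $x:=\mathrm{lev}^U(z)-c$ is non-decreasing, and let $T$ be a prefix set $\{1,\dots,k\}$, $1\le k\le n-1$, with largest margin $\gamma$ among such prefix sets. Then \[\gamma^2\ge\frac{1}{2n^3}\|\mathrm{lev}^U(z)-c\|_2^2.\]
   Context: A frame is a full row rank matrix $U=(u_1,\dots,u_n)\in\mathbb{R}^{d\times n}$; $Z=\mathrm{diag}(z)$; $\mathrm{lev}^U_j(z):=z_ju_j^{\mathsf T}(UZU^{\mathsf T})^{-1}u_j$. The margin of $T\subseteq[n]$ is the largest $\gamma\ge0$ for which there is $\nu\in\mathbb{R}$ with $\max_{j\in T}(\mathrm{lev}^U_j(z)-c_j)\le\nu-\gamma\le\nu+\gamma\le\min_{j\notin T}(\mathrm{lev}^U_j(z)-c_j)$. *)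

theory Defs
  imports "HOL-Analysis.Analysis"
begin

definition is_frame :: "real^'n^'d \<Rightarrow> bool" where
  "is_frame U \<longleftrightarrow> rank U = CARD('d)"

definition diagm :: "real^'n \<Rightarrow> real^'n^'n" where
  "diagm z = (\<chi> i j. if i = j then z $ i else 0)"

definition lev :: "real^'n^'d \<Rightarrow> real^'n \<Rightarrow> real^'n" where
  "lev U z = (\<chi> j. z $ j * (column j U \<bullet>
      (matrix_inv (U ** diagm z ** transpose U) *v column j U)))"

definition margin :: "real^'n \<Rightarrow> 'n set \<Rightarrow> real" where
  "margin x T = (GREATEST \<gamma>. \<gamma> \<ge> 0 \<and> (\<exists>\<nu>.
      (\<forall>j\<in>T. x $ j \<le> \<nu> - \<gamma>) \<and> \<nu> - \<gamma> \<le> \<nu> + \<gamma> \<and>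
      (\<forall>j\<in>- T. \<nu> + \<gamma> \<le> x $ j)))"

end

theory Submission
  imports Defs
begin

text \<open>The leverage scores are the diagonal of \<open>Z U\<^sup>T (U Z U\<^sup>T)\<^sup>-\<^sup>1 U\<close>, whose trace is that of
  \<open>(U Z U\<^sup>T)(U Z U\<^sup>T)\<^sup>-\<^sup>1 = I\<^sub>d\<close>; hence they sum to \<open>d\<close> and \<open>x = lev\<^sup>U(z) - c\<close> sums to zero.
  The margin of the prefix set of size \<open>k\<close> is half the gap \<open>x\<^sub>k\<^sub>+\<^sub>1 - x\<^sub>k\<close> of the sorted
  vector, so the largest prefix margin \<open>\<gamma>\<close> bounds every gap by \<open>2\<gamma>\<close> and the spread
  \<open>max x - min x\<close> by \<open>2(n-1)\<gamma>\<close>. Finally a zero-sum vector with entries in \<open>[m, M]\<close>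
  satisfies \<open>\<parallel>x\<parallel>\<^sup>2 \<le> n (M - m)\<^sup>2 / 4\<close>, because \<open>\<Sum>\<^sub>j (x\<^sub>j - m)(M - x\<^sub>j) \<ge> 0\<close>.\<close>

lemma matrix_inv_right:
  fixes A :: "'a::semiring_1^'n^'m"
  assumes "invertible A"
  shows "A ** matrix_inv A = mat 1"
proof -
  have "A ** matrix_inv A = mat 1 \<and> matrix_inv A ** A = mat 1"
    using assms unfolding invertible_def matrix_inv_def by (rule someI_ex)
  then show ?thesis ..
qed

lemma diagm_mult_vec: "diagm z *v w = (\<chi> j. z $ j * w $ j)"
proof -
  have "(\<Sum>j\<in>UNIV. (if i = j then z $ i else 0) * w $ j) = z $ i * w $ i" for i
    by (simp add: if_distrib[of "\<lambda>t. t * _"] cong: if_cong)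
  then show ?thesis unfolding diagm_def matrix_vector_mult_def by (simp add: vec_eq_iff)
qed

lemma quadratic_form_weighted_gram:
  fixes U :: "real^'n^'d"
  shows "v \<bullet> ((U ** diagm z ** transpose U) *v v) = (\<Sum>j\<in>UNIV. z $ j * ((transpose U *v v) $ j)\<^sup>2)"
proof -
  have "v \<bullet> ((U ** diagm z ** transpose U) *v v) = v \<bullet> (U *v (diagm z *v (transpose U *v v)))"
    by (metis matrix_vector_mul_assoc)
  also have "\<dots> = (transpose U *v v) \<bullet> (diagm z *v (transpose U *v v))"
    by (simp add: dot_lmul_matrix[symmetric] transpose_matrix_vector)
  also have "\<dots> = (\<Sum>j\<in>UNIV. z $ j * ((transpose U *v v) $ j)\<^sup>2)"
    unfolding inner_vec_def diagm_mult_vec by (auto simp: power2_eq_square intro!: sum.cong)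
  finally show ?thesis .
qed

lemma invertible_weighted_gram:
  fixes U :: "real^'n^'d"
  assumes "is_frame U" and "\<forall>j. z $ j > 0"
  shows "invertible (U ** diagm z ** transpose U)"
proof -
  have "v = 0" if "(U ** diagm z ** transpose U) *v v = 0" for v
  proof -
    have "(\<Sum>j\<in>UNIV. z $ j * ((transpose U *v v) $ j)\<^sup>2) = 0"
      using that quadratic_form_weighted_gram[of v U z] by simp
    then have "\<forall>j. z $ j * ((transpose U *v v) $ j)\<^sup>2 = 0"
      using assms(2) by (simp add: sum_nonneg_eq_0_iff less_imp_le)
    then have "transpose U *v v = 0"
      using assms(2) by (simp add: vec_eq_iff) (metis less_irrefl)
    moreover have "inj ((*v) (transpose U))"
      using assms(1) by (simp add: is_frame_def rank_transpose full_rank_injective[symmetric])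
    ultimately show "v = 0" by (simp add: vec.inj_iff_eq_0)
  qed
  then show ?thesis
    by (simp add: invertible_left_inverse matrix_left_invertible_ker)
qed

lemma diagm_mult_row: "(diagm z ** A) $ i = z $ i *s A $ i"
  unfolding diagm_def matrix_matrix_mult_def
  by (simp add: vec_eq_iff if_distrib[of "\<lambda>t. t * _"] cong: if_cong)

lemma diag_transpose_mult_mult:
  fixes U :: "real^'n^'d"
  shows "(transpose U ** (B ** U)) $ j $ j = column j U \<bullet> (B *v column j U)"
  by (simp add: matrix_matrix_mult_def matrix_vector_mult_def inner_vec_def column_def
      transpose_def sum_distrib_left sum_distrib_right mult_ac)

lemma lev_eq_diag:
  "lev U z $ j = (diagm z ** transpose U ** matrix_inv (U ** diagm z ** transpose U) ** U) $ j $ j"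
  by (simp add: lev_def matrix_mul_assoc[symmetric] diagm_mult_row diag_transpose_mult_mult)

lemma sum_lev:
  fixes U :: "real^'n^'d"
  assumes "is_frame U" and "\<forall>j. z $ j > 0"
  shows "(\<Sum>j\<in>UNIV. lev U z $ j) = real CARD('d)"
proof -
  let ?G = "U ** diagm z ** transpose U"
  have "(\<Sum>j\<in>UNIV. lev U z $ j) = trace (diagm z ** transpose U ** matrix_inv ?G ** U)"
    by (simp add: trace_def lev_eq_diag)
  also have "\<dots> = trace (U ** (diagm z ** transpose U ** matrix_inv ?G))"
    by (rule trace_mul_sym)
  also have "\<dots> = trace (?G ** matrix_inv ?G)"
    by (simp add: matrix_mul_assoc)
  also have "\<dots> = real CARD('d)"
    by (simp add: matrix_inv_right[OF invertible_weighted_gram[OF assms]] trace_I)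
  finally show ?thesis .
qed

lemma margin_eq_half_gap:
  fixes x :: "real^'n"
  assumes "a \<in> T" and "b \<notin> T" and "x $ a \<le> x $ b"
    and "\<forall>j\<in>T. x $ j \<le> x $ a" and "\<forall>j\<in>-T. x $ b \<le> x $ j"
  shows "margin x T = (x $ b - x $ a) / 2"
  unfolding margin_def
proof (rule Greatest_equality)
  let ?\<gamma> = "(x $ b - x $ a) / 2"
  show "?\<gamma> \<ge> 0 \<and> (\<exists>\<nu>. (\<forall>j\<in>T. x $ j \<le> \<nu> - ?\<gamma>) \<and> \<nu> - ?\<gamma> \<le> \<nu> + ?\<gamma> \<and>
      (\<forall>j\<in>-T. \<nu> + ?\<gamma> \<le> x $ j))"
    using assms(3-5) by (intro conjI exI[of _ "(x $ a + x $ b) / 2"]) (auto simp: field_simps)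
next
  fix \<gamma> assume "\<gamma> \<ge> 0 \<and> (\<exists>\<nu>. (\<forall>j\<in>T. x $ j \<le> \<nu> - \<gamma>) \<and> \<nu> - \<gamma> \<le> \<nu> + \<gamma> \<and>
      (\<forall>j\<in>-T. \<nu> + \<gamma> \<le> x $ j))"
  then obtain \<nu> where "x $ a \<le> \<nu> - \<gamma>" and "\<nu> + \<gamma> \<le> x $ b"
    using assms(1,2) by blast
  then show "\<gamma> \<le> (x $ b - x $ a) / 2" by simp
qed

lemma sorted_perm_bounds:
  fixes x :: "real^'n"
  assumes bij: "bij_betw \<sigma> {0..<CARD('n)} UNIV"
    and sorted: "\<forall>i l. i \<le> l \<and> l < CARD('n) \<longrightarrow> x $ \<sigma> i \<le> x $ \<sigma> l"
  shows "x $ \<sigma> 0 \<le> x $ j" and "x $ j \<le> x $ \<sigma> (CARD('n) - 1)"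
proof -
  obtain i where "i < CARD('n)" and "j = \<sigma> i"
    using bij by (metis UNIV_I atLeastLessThan_iff bij_betw_iff_bijections)
  then show "x $ \<sigma> 0 \<le> x $ j" and "x $ j \<le> x $ \<sigma> (CARD('n) - 1)"
    using sorted by auto
qed

lemma margin_sorted_prefix:
  fixes x :: "real^'n"
  assumes bij: "bij_betw \<sigma> {0..<CARD('n)} UNIV"
    and sorted: "\<forall>i l. i \<le> l \<and> l < CARD('n) \<longrightarrow> x $ \<sigma> i \<le> x $ \<sigma> l"
    and "0 < k" and "k < CARD('n)"
  shows "margin x (\<sigma> ` {0..<k}) = (x $ \<sigma> k - x $ \<sigma> (k - 1)) / 2"
proof (rule margin_eq_half_gap)
  have inj: "inj_on \<sigma> {0..<CARD('n)}"
    using bij by (rule bij_betw_imp_inj_on)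
  show "\<sigma> k \<notin> \<sigma> ` {0..<k}"
    using inj_on_image_mem_iff[OF inj] \<open>k < CARD('n)\<close> by auto
  show "\<forall>j\<in>-\<sigma> ` {0..<k}. x $ \<sigma> k \<le> x $ j"
  proof
    fix j assume "j \<in> -\<sigma> ` {0..<k}"
    moreover obtain i where "i < CARD('n)" and "j = \<sigma> i"
      using bij by (metis UNIV_I atLeastLessThan_iff bij_betw_iff_bijections)
    ultimately have "k \<le> i" and "i < CARD('n)" and "j = \<sigma> i"
      by (auto simp: not_less[symmetric])
    then show "x $ \<sigma> k \<le> x $ j"
      using sorted by blast
  qed
  have "x $ \<sigma> i \<le> x $ \<sigma> (k - 1)" if "i < k" for i
  proof -
    have "i \<le> k - 1" and "k - 1 < CARD('n)"
      using that \<open>k < CARD('n)\<close> by auto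
    then show ?thesis using sorted by blast
  qed
  then show "\<forall>j\<in>\<sigma> ` {0..<k}. x $ j \<le> x $ \<sigma> (k - 1)"
    by auto
qed (use assms in auto)

lemma diff_le_of_steps_le:
  fixes f :: "nat \<Rightarrow> real"
  assumes "\<And>i. i < m \<Longrightarrow> f (Suc i) - f i \<le> g"
  shows "f m - f 0 \<le> real m * g"
proof -
  have "f m - f 0 = (\<Sum>i<m. f (Suc i) - f i)"
    by (rule sum_lessThan_telescope[symmetric])
  also have "\<dots> \<le> (\<Sum>i<m. g)"
    using assms by (intro sum_mono) auto
  finally show ?thesis by simp
qed

lemma spread_le_prefix_margin_bound:
  fixes x :: "real^'n"
  assumes bij: "bij_betw \<sigma> {0..<CARD('n)} UNIV"
    and sorted: "\<forall>i l. i \<le> l \<and> l < CARD('n) \<longrightarrow> x $ \<sigma> i \<le> x $ \<sigma> l"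
    and margin_le: "\<And>k. 0 < k \<Longrightarrow> k < CARD('n) \<Longrightarrow> margin x (\<sigma> ` {0..<k}) \<le> \<gamma>"
  shows "x $ \<sigma> (CARD('n) - 1) - x $ \<sigma> 0 \<le> real (CARD('n) - 1) * (2 * \<gamma>)"
proof (rule diff_le_of_steps_le)
  fix i assume "i < CARD('n) - 1"
  then have "margin x (\<sigma> ` {0..<Suc i}) = (x $ \<sigma> (Suc i) - x $ \<sigma> i) / 2"
    and "margin x (\<sigma> ` {0..<Suc i}) \<le> \<gamma>"
    using margin_sorted_prefix[OF bij sorted, of "Suc i"] margin_le[of "Suc i"] by simp_all
  then show "x $ \<sigma> (Suc i) - x $ \<sigma> i \<le> 2 * \<gamma>" by simp
qed

lemma sum_squares_le_of_sum_eq_0: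
  fixes x :: "'a \<Rightarrow> real"
  assumes "finite A" and "(\<Sum>j\<in>A. x j) = 0" and "\<And>j. j \<in> A \<Longrightarrow> m \<le> x j \<and> x j \<le> M"
  shows "(\<Sum>j\<in>A. (x j)\<^sup>2) \<le> real (card A) * (M - m)\<^sup>2 / 4"
proof -
  have "0 \<le> (\<Sum>j\<in>A. (x j - m) * (M - x j))"
    using assms(3) by (intro sum_nonneg mult_nonneg_nonneg) auto
  also have "\<dots> = (M + m) * (\<Sum>j\<in>A. x j) - (\<Sum>j\<in>A. (x j)\<^sup>2) - real (card A) * (m * M)"
    by (simp add: algebra_simps power2_eq_square sum.distrib sum_subtractf sum_distrib_left)
  finally have "(\<Sum>j\<in>A. (x j)\<^sup>2) \<le> real (card A) * (- m * M)"
    using assms(2) by simp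
  also have "\<dots> \<le> real (card A) * ((M - m)\<^sup>2 / 4)"
    using zero_le_power2[of "M + m"]
    by (intro mult_left_mono) (simp_all add: power2_eq_square algebra_simps)
  finally show ?thesis by simp
qed

lemma norm_sq_le_of_sum_eq_0:
  fixes x :: "real^'n"
  assumes "(\<Sum>j\<in>UNIV. x $ j) = 0" and "\<And>j. m \<le> x $ j \<and> x $ j \<le> M"
  shows "(norm x)\<^sup>2 \<le> real CARD('n) * (M - m)\<^sup>2 / 4"
proof -
  have "(norm x)\<^sup>2 = (\<Sum>j\<in>UNIV. (x $ j)\<^sup>2)"
    by (simp add: norm_vec_def L2_set_def sum_nonneg)
  also have "\<dots> \<le> real CARD('n) * (M - m)\<^sup>2 / 4"
    using assms by (intro sum_squares_le_of_sum_eq_0) auto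
  finally show ?thesis .
qed

theorem proposition2p6:
  fixes U :: "real^'n^'d" and z c :: "real^'n"
    and \<sigma> :: "nat \<Rightarrow> 'n" and k :: nat
  assumes frame: "is_frame U"
    and n2: "CARD('n) \<ge> 2"
    and zpos: "\<forall>j. z $ j > 0"
    and cnonneg: "\<forall>j. c $ j \<ge> 0"
    and csum: "(\<Sum>j\<in>UNIV. c $ j) = real CARD('d)"
    and \<sigma>bij: "bij_betw \<sigma> {0..<CARD('n)} UNIV"
    and sorted: "\<forall>i l. i \<le> l \<and> l < CARD('n) \<longrightarrow>
                   (lev U z - c) $ \<sigma> i \<le> (lev U z - c) $ \<sigma> l"
    and krange: "1 \<le> k" "k \<le> CARD('n) - 1"
    and kbest: "\<forall>k'. 1 \<le> k' \<and> k' \<le> CARD('n) - 1 \<longrightarrow>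
                   margin (lev U z - c) (\<sigma> ` {0..<k'}) \<le> margin (lev U z - c) (\<sigma> ` {0..<k})"
  shows "(margin (lev U z - c) (\<sigma> ` {0..<k}))\<^sup>2
           \<ge> 1 / (2 * real CARD('n) ^ 3) * (norm (lev U z - c))\<^sup>2"
proof -
  define x where "x = lev U z - c"
  define n where "n = CARD('n)"
  define \<gamma> where "\<gamma> = margin x (\<sigma> ` {0..<k})"
  define spread where "spread = x $ \<sigma> (n - 1) - x $ \<sigma> 0"
  note bounds = sorted_perm_bounds[OF \<sigma>bij sorted[folded x_def], folded n_def]
  have spread_le: "spread \<le> real (n - 1) * (2 * \<gamma>)"
    unfolding spread_def n_def \<gamma>_def x_def
    by (rule spread_le_prefix_margin_bound[OF \<sigma>bij sorted]) (use kbest in simp)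
  have spread_nonneg: "0 \<le> spread"
    using bounds(1)[of "\<sigma> (n - 1)"] unfolding spread_def by simp
  have "(\<Sum>j\<in>UNIV. x $ j) = 0"
    using sum_lev[OF frame zpos] csum by (simp add: x_def sum_subtractf)
  then have "(norm x)\<^sup>2 \<le> real n * spread\<^sup>2 / 4"
    unfolding n_def spread_def using bounds by (intro norm_sq_le_of_sum_eq_0) (auto simp: n_def)
  also have "\<dots> \<le> real n * (real (n - 1) * (2 * \<gamma>))\<^sup>2 / 4"
    using power_mono[OF spread_le spread_nonneg, of 2]
    by (intro divide_right_mono mult_left_mono) auto
  also have "\<dots> = real n * real (n - 1) ^ 2 * \<gamma>\<^sup>2"
    by (simp add: power_mult_distrib)
  also have "\<dots> \<le> real n * real n ^ 2 * \<gamma>\<^sup>2"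
    by (intro mult_left_mono mult_right_mono power_mono) auto
  also have "\<dots> = real n ^ 3 * \<gamma>\<^sup>2"
    by (simp add: power3_eq_cube power2_eq_square)
  also have "\<dots> \<le> 2 * real n ^ 3 * \<gamma>\<^sup>2"
    by simp
  finally have "(norm x)\<^sup>2 \<le> 2 * real n ^ 3 * \<gamma>\<^sup>2" .
  then show ?thesis
    using n2 unfolding x_def \<gamma>_def n_def by (simp add: field_simps)
qed

end
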